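(* Let $G$ be a group and $N\trianglelefteq G$ a solvable normal subgroup of derived length $d$ and finite exponent. (i) If $\exp(N)$ is odd, then $\exp(N\otimes G)$ divides $(\exp(N))^d$; in particular $\exp(M(G,N))$ divides $(\exp(N))^d$. (ii) If $\exp(N)$ is even, then $\exp(N\otimes G)$ divides $2^d(\exp(N))^d$; in particular $\exp(M(G,N))$ divides $2^d(\exp(N))^d$.
   Context: Conventions: ${}^g h = ghg^{-1}$, $[g,h]=ghg^{-1}h^{-1}$. $N\otimes G$ is generated by symbols $x\otimes g$ ($x\in N$, $g\in G$) subject to $xx'\otimes g=({}^x x'\otimes {}^x g)(x\otimes g)$ and $x\otimes gg'=(x\otimes g)({}^g x\otimes {}^g g')$; $N\wedge G$ is its quotient by the subgroup generated by all $x\otimes x$, $x\in N$. The relative Schur multiplier $M(G,N)$ is the kernel of the homomorphism $N\wedge G\to G$, $x\wedge g\mapsto [x,g]$. *)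

theory Defs
  imports "HOL-Algebra.Algebra"
begin

text \<open>Exponent of a subset N of a group G (intended: a subgroup): the least positive n
  with x^n = 1 for all x in N, and 0 if no such n exists (infinite exponent).\<close>
definition subgroup_exponent :: "('a, 'b) monoid_scheme \<Rightarrow> 'a set \<Rightarrow> nat" where
  "subgroup_exponent G N =
     (if \<exists>n::nat>0. \<forall>x\<in>N. x [^]\<^bsub>G\<^esub> n = \<one>\<^bsub>G\<^esub>
      then (LEAST n::nat. n > 0 \<and> (\<forall>x\<in>N. x [^]\<^bsub>G\<^esub> n = \<one>\<^bsub>G\<^esub>))
      else 0)"

text \<open>Words in the free group on symbols (x, g): a letter (x, g, False) stands for
  the generator x \<otimes> g, a letter (x, g, True) for its inverse.\<close>
type_synonym 'a tword = "('a \<times> 'a \<times> bool) list"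

definition conjg :: "('a, 'b) monoid_scheme \<Rightarrow> 'a \<Rightarrow> 'a \<Rightarrow> 'a" where
  "conjg G g h = g \<otimes>\<^bsub>G\<^esub> h \<otimes>\<^bsub>G\<^esub> inv\<^bsub>G\<^esub> g"

definition comm :: "('a, 'b) monoid_scheme \<Rightarrow> 'a \<Rightarrow> 'a \<Rightarrow> 'a" where
  "comm G g h = g \<otimes>\<^bsub>G\<^esub> h \<otimes>\<^bsub>G\<^esub> inv\<^bsub>G\<^esub> g \<otimes>\<^bsub>G\<^esub> inv\<^bsub>G\<^esub> h"

fun flip_letter :: "'a \<times> 'a \<times> bool \<Rightarrow> 'a \<times> 'a \<times> bool" where
  "flip_letter (x, g, b) = (x, g, \<not> b)"

definition wpow :: "'a tword \<Rightarrow> nat \<Rightarrow> 'a tword" where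
  "wpow w n = concat (replicate n w)"

text \<open>The congruence on words defining N \<otimes> G (free group relations plus the two
  defining relations of the nonabelian tensor product).\<close>
inductive tensor_eq :: "('a, 'b) monoid_scheme \<Rightarrow> 'a set \<Rightarrow> 'a tword \<Rightarrow> 'a tword \<Rightarrow> bool"
  for G N where
  refl: "tensor_eq G N w w"
| sym: "tensor_eq G N u v \<Longrightarrow> tensor_eq G N v u"
| trans: "tensor_eq G N u v \<Longrightarrow> tensor_eq G N v w \<Longrightarrow> tensor_eq G N u w"
| cong: "tensor_eq G N u v \<Longrightarrow> tensor_eq G N (a @ u @ b) (a @ v @ b)"
| cancel: "tensor_eq G N [l, flip_letter l] []"
| rel1: "\<lbrakk>x \<in> N; x' \<in> N; g \<in> carrier G\<rbrakk> \<Longrightarrow>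
     tensor_eq G N [(x \<otimes>\<^bsub>G\<^esub> x', g, False)]
                   [(conjg G x x', conjg G x g, False), (x, g, False)]"
| rel2: "\<lbrakk>x \<in> N; g \<in> carrier G; g' \<in> carrier G\<rbrakk> \<Longrightarrow>
     tensor_eq G N [(x, g \<otimes>\<^bsub>G\<^esub> g', False)]
                   [(x, g, False), (conjg G g x, conjg G g g', False)]"

text \<open>The congruence defining N \<wedge> G: additionally x \<otimes> x = 1 for x in N.\<close>
inductive wedge_eq :: "('a, 'b) monoid_scheme \<Rightarrow> 'a set \<Rightarrow> 'a tword \<Rightarrow> 'a tword \<Rightarrow> bool"
  for G N where
  refl: "wedge_eq G N w w"
| sym: "wedge_eq G N u v \<Longrightarrow> wedge_eq G N v u"
| trans: "wedge_eq G N u v \<Longrightarrow> wedge_eq G N v w \<Longrightarrow> wedge_eq G N u w"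
| cong: "wedge_eq G N u v \<Longrightarrow> wedge_eq G N (a @ u @ b) (a @ v @ b)"
| cancel: "wedge_eq G N [l, flip_letter l] []"
| rel1: "\<lbrakk>x \<in> N; x' \<in> N; g \<in> carrier G\<rbrakk> \<Longrightarrow>
     wedge_eq G N [(x \<otimes>\<^bsub>G\<^esub> x', g, False)]
                  [(conjg G x x', conjg G x g, False), (x, g, False)]"
| rel2: "\<lbrakk>x \<in> N; g \<in> carrier G; g' \<in> carrier G\<rbrakk> \<Longrightarrow>
     wedge_eq G N [(x, g \<otimes>\<^bsub>G\<^esub> g', False)]
                  [(x, g, False), (conjg G g x, conjg G g g', False)]"
| diag: "x \<in> N \<Longrightarrow> wedge_eq G N [(x, x, False)] []"

definition twords :: "('a, 'b) monoid_scheme \<Rightarrow> 'a set \<Rightarrow> 'a tword set" where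
  "twords G N = {w. \<forall>(x, g, b) \<in> set w. x \<in> N \<and> g \<in> carrier G}"

text \<open>Image of a word under N \<wedge> G \<rightarrow> G, x \<wedge> g \<mapsto> [x,g].\<close>
definition comm_eval :: "('a, 'b) monoid_scheme \<Rightarrow> 'a tword \<Rightarrow> 'a" where
  "comm_eval G w = foldr (\<lambda>(x, g, b) acc.
      (if b then inv\<^bsub>G\<^esub> (comm G x g) else comm G x g) \<otimes>\<^bsub>G\<^esub> acc) w \<one>\<^bsub>G\<^esub>"

definition tensor_exponent :: "('a, 'b) monoid_scheme \<Rightarrow> 'a set \<Rightarrow> nat" where
  "tensor_exponent G N =
     (if \<exists>n>0. \<forall>w\<in>twords G N. tensor_eq G N (wpow w n) []
      then (LEAST n. n > 0 \<and> (\<forall>w\<in>twords G N. tensor_eq G N (wpow w n) []))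
      else 0)"

text \<open>Words representing elements of M(G,N) = ker(N \<wedge> G \<rightarrow> G).\<close>
definition mwords :: "('a, 'b) monoid_scheme \<Rightarrow> 'a set \<Rightarrow> 'a tword set" where
  "mwords G N = {w \<in> twords G N. comm_eval G w = \<one>\<^bsub>G\<^esub>}"

definition rel_multiplier_exponent :: "('a, 'b) monoid_scheme \<Rightarrow> 'a set \<Rightarrow> nat" where
  "rel_multiplier_exponent G N =
     (if \<exists>n>0. \<forall>w\<in>mwords G N. wedge_eq G N (wpow w n) []
      then (LEAST n. n > 0 \<and> (\<forall>w\<in>mwords G N. wedge_eq G N (wpow w n) []))
      else 0)"

end

(*
  Write e = exp N, m = e for odd e and m = 2e for even e, and T = N \<otimes> G. For a normal subgroup
  K of G inside N let T_K be the subgroup of T generated by all x \<otimes> g and y \<otimes> k with x, k in K;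
  it is normal, T_N = T and T_1 = 1. Suppose [K,K] \<subseteq> L. Modulo T_L the generators of T_K
  generate a group of class at most two: [x \<otimes> g, y \<otimes> h] = [x,g] \<otimes> [y,h] has both entries
  in K, and such an element k \<otimes> c is central and satisfies (k \<otimes> c)^n = k^n \<otimes> c, so its order
  divides e. Expanding 1 = x^e \<otimes> g (or 1 = x \<otimes> g^e when only g lies in K) shows
  s^e z^(e(e-1)/2) = 1 for each generator s and a central z of order dividing e, hence s^m = 1;
  since e divides m(m-1)/2, the identity (uv)^m = u^m v^m [v,u]^(m(m-1)/2) gives u^m in T_L for
  all u in T_K. Descending the derived series of N yields T^(m^d) = 1, and M(G,N) lies in
  N \<wedge> G, a quotient of T.
*)

theory Submission
  imports Defs
begin

section \<open>Commutators and conjugation\<close>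

context group
begin

lemma inv_mult_cancel_left [simp]: "x \<in> carrier G \<Longrightarrow> y \<in> carrier G \<Longrightarrow> inv x \<otimes> (x \<otimes> y) = y"
  by (simp add: m_assoc[symmetric])

lemma mult_inv_cancel_left [simp]: "x \<in> carrier G \<Longrightarrow> y \<in> carrier G \<Longrightarrow> x \<otimes> (inv x \<otimes> y) = y"
  by (simp add: m_assoc[symmetric])

lemma commute_inv:
  assumes "x \<in> carrier G" "y \<in> carrier G" "x \<otimes> y = y \<otimes> x"
  shows "inv x \<otimes> y = y \<otimes> inv x"
proof -
  have "inv x \<otimes> (x \<otimes> y) \<otimes> inv x = inv x \<otimes> (y \<otimes> x) \<otimes> inv x" using assms(3) by simp
  then show ?thesis using assms(1,2) by (simp add: m_assoc)
qed

lemma conjg_closed [simp]: "h \<in> carrier G \<Longrightarrow> x \<in> carrier G \<Longrightarrow> conjg G h x \<in> carrier G"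
  by (simp add: conjg_def)

lemma conjg_mult:
  "h \<in> carrier G \<Longrightarrow> x \<in> carrier G \<Longrightarrow> y \<in> carrier G \<Longrightarrow>
    conjg G h (x \<otimes> y) = conjg G h x \<otimes> conjg G h y"
  by (simp add: conjg_def m_assoc)

lemma conjg_conjg:
  "h \<in> carrier G \<Longrightarrow> k \<in> carrier G \<Longrightarrow> x \<in> carrier G \<Longrightarrow>
    conjg G h (conjg G k x) = conjg G (h \<otimes> k) x"
  by (simp add: conjg_def m_assoc inv_mult_group)

lemma conjg_conjg_conjg:
  "h \<in> carrier G \<Longrightarrow> k \<in> carrier G \<Longrightarrow> x \<in> carrier G \<Longrightarrow>
    conjg G (conjg G h k) (conjg G h x) = conjg G (h \<otimes> k) x"
  by (simp add: conjg_def m_assoc inv_mult_group)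

lemma conjg_one [simp]: "x \<in> carrier G \<Longrightarrow> conjg G \<one> x = x"
  by (simp add: conjg_def)

lemma conjg_inv_conjg [simp]:
  "h \<in> carrier G \<Longrightarrow> x \<in> carrier G \<Longrightarrow> conjg G h (conjg G (inv h) x) = x"
  "h \<in> carrier G \<Longrightarrow> x \<in> carrier G \<Longrightarrow> conjg G (inv h) (conjg G h x) = x"
  by (simp_all add: conjg_def m_assoc)

lemma conjg_inv: "h \<in> carrier G \<Longrightarrow> x \<in> carrier G \<Longrightarrow> conjg G h (inv x) = inv (conjg G h x)"
  by (simp add: conjg_def m_assoc inv_mult_group)

lemma comm_closed [simp]: "x \<in> carrier G \<Longrightarrow> y \<in> carrier G \<Longrightarrow> comm G x y \<in> carrier G"
  by (simp add: comm_def)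

lemma comm_one_right [simp]: "x \<in> carrier G \<Longrightarrow> comm G x \<one> = \<one>"
  by (simp add: comm_def)

lemma inv_comm: "x \<in> carrier G \<Longrightarrow> y \<in> carrier G \<Longrightarrow> inv (comm G x y) = comm G y x"
  by (simp add: comm_def inv_mult_group m_assoc)

lemma mult_eq_comm_mult: "x \<in> carrier G \<Longrightarrow> y \<in> carrier G \<Longrightarrow> x \<otimes> y = comm G x y \<otimes> y \<otimes> x"
  by (simp add: comm_def m_assoc)

lemma comm_inv_right:
  "x \<in> carrier G \<Longrightarrow> y \<in> carrier G \<Longrightarrow> comm G x (inv y) = inv y \<otimes> inv (comm G x y) \<otimes> y"
  by (simp add: comm_def m_assoc inv_mult_group)

lemma comm_mult_right:
  "x \<in> carrier G \<Longrightarrow> y \<in> carrier G \<Longrightarrow> z \<in> carrier G \<Longrightarrow>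
    comm G x (y \<otimes> z) = comm G x y \<otimes> (y \<otimes> comm G x z \<otimes> inv y)"
  by (simp add: comm_def m_assoc inv_mult_group)

lemma comm_eq_conjg_mult_inv: "y \<in> carrier G \<Longrightarrow> h \<in> carrier G \<Longrightarrow> comm G y h = conjg G y h \<otimes> inv h"
  by (simp add: comm_def conjg_def)

lemma normal_conjg_closed: "K \<lhd> G \<Longrightarrow> k \<in> K \<Longrightarrow> c \<in> carrier G \<Longrightarrow> conjg G c k \<in> K"
  unfolding conjg_def by (rule normal.inv_op_closed2)

lemma comm_mem_normal:
  assumes K: "K \<lhd> G" and x: "x \<in> carrier G" and g: "g \<in> carrier G" and xg: "x \<in> K \<or> g \<in> K"
  shows "comm G x g \<in> K"
proof -
  interpret K: normal K G by (rule K)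
  show ?thesis
  proof (cases "x \<in> K")
    case True
    have "comm G x g = x \<otimes> conjg G g (inv x)" using x g by (simp add: comm_def conjg_def m_assoc)
    then show ?thesis using True g normal_conjg_closed[OF K] by auto
  next
    case False
    then have "g \<in> K" using xg by simp
    moreover have "comm G x g = conjg G x g \<otimes> inv g" using x g by (simp add: comm_def conjg_def)
    ultimately show ?thesis using x normal_conjg_closed[OF K] by auto
  qed
qed

lemma comm_mem_derived: "k \<in> H \<Longrightarrow> c \<in> H \<Longrightarrow> comm G k c \<in> derived G H"
  unfolding derived_def comm_def by (rule generate.incl) blast

lemma normal_derived_iter: "N \<lhd> G \<Longrightarrow> (derived G ^^ i) N \<lhd> G"
  by (induction i) (simp_all add: derived_is_normal)

lemma derived_iter_subset: "N \<lhd> G \<Longrightarrow> (derived G ^^ i) N \<subseteq> N"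
proof (induction i)
  case (Suc i)
  have "derived G ((derived G ^^ i) N) \<subseteq> (derived G ^^ i) N"
    using derived_incl[OF order_refl normal_imp_subgroup[OF normal_derived_iter[OF Suc.prems]]] .
  then show ?case using Suc by simp
qed simp

lemma conj_mem_of_generate:
  assumes S: "S \<subseteq> carrier G" and A: "A \<subseteq> carrier G"
    and conj: "\<And>s a. s \<in> S \<Longrightarrow> a \<in> A \<Longrightarrow> s \<otimes> a \<otimes> inv s \<in> A"
    and conj_inv: "\<And>s a. s \<in> S \<Longrightarrow> a \<in> A \<Longrightarrow> inv s \<otimes> a \<otimes> s \<in> A"
    and u: "u \<in> generate G S" and a: "a \<in> A"
  shows "u \<otimes> a \<otimes> inv u \<in> A"
  using u a
proof (induction arbitrary: a rule: generate.induct)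
  case one
  then show ?case using A by auto
next
  case (incl s)
  then show ?case by (rule conj)
next
  case (inv s)
  then show ?case using conj_inv S by auto
next
  case (eng u1 u2)
  have "u1 \<in> carrier G" "u2 \<in> carrier G" "a \<in> carrier G"
    using eng generate_incl[OF S] A by auto
  then have "u1 \<otimes> u2 \<otimes> a \<otimes> inv (u1 \<otimes> u2) = u1 \<otimes> (u2 \<otimes> a \<otimes> inv u2) \<otimes> inv u1"
    by (simp add: m_assoc inv_mult_group)
  then show ?case using eng by simp
qed

end


section \<open>Groups of class two\<close>

definition centralizer :: "('a, 'b) monoid_scheme \<Rightarrow> 'a set \<Rightarrow> 'a set" where
  "centralizer G B = {x \<in> carrier G. \<forall>b\<in>B. x \<otimes>\<^bsub>G\<^esub> b = b \<otimes>\<^bsub>G\<^esub> x}"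

context group
begin

lemma subgroup_centralizer:
  assumes "B \<subseteq> carrier G"
  shows "subgroup (centralizer G B) G"
proof (rule subgroupI)
  fix x y assume x: "x \<in> centralizer G B" and y: "y \<in> centralizer G B"
  have "x \<otimes> y \<otimes> b = b \<otimes> (x \<otimes> y)" if b: "b \<in> B" for b
  proof -
    have c: "x \<in> carrier G" "y \<in> carrier G" "b \<in> carrier G" "x \<otimes> b = b \<otimes> x" "y \<otimes> b = b \<otimes> y"
      using assms b x y by (auto simp: centralizer_def)
    then have "x \<otimes> y \<otimes> b = x \<otimes> (b \<otimes> y)" by (simp add: m_assoc)
    also have "\<dots> = b \<otimes> (x \<otimes> y)" using c by (simp add: m_assoc[symmetric])
    finally show ?thesis .
  qed
  then show "x \<otimes> y \<in> centralizer G B" using x y by (auto simp: centralizer_def)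
next
  fix x assume "x \<in> centralizer G B"
  then show "inv x \<in> centralizer G B"
    using assms commute_inv unfolding centralizer_def by auto
next
  have "\<one> \<in> centralizer G B" using assms by (auto simp: centralizer_def)
  then show "centralizer G B \<noteq> {}" by blast
qed (auto simp: centralizer_def)

lemma subset_centralizer_sym:
  "A \<subseteq> carrier G \<Longrightarrow> B \<subseteq> carrier G \<Longrightarrow> A \<subseteq> centralizer G B \<longleftrightarrow> B \<subseteq> centralizer G A"
  unfolding centralizer_def by auto

lemma generate_subset_centralizer:
  "A \<subseteq> centralizer G B \<Longrightarrow> B \<subseteq> carrier G \<Longrightarrow> generate G A \<subseteq> centralizer G B"
  by (simp add: generate_subgroup_incl subgroup_centralizer)

lemma centralizer_commute:
  "z \<in> centralizer G B \<Longrightarrow> b \<in> B \<Longrightarrow> z \<otimes> b = b \<otimes> z"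
  by (simp add: centralizer_def)

lemma nat_pow_commute:
  assumes "x \<in> carrier G" "y \<in> carrier G" "x \<otimes> y = y \<otimes> x"
  shows "x [^] (k::nat) \<otimes> y [^] (n::nat) = y [^] n \<otimes> x [^] k"
  by (metis assms group_commutes_pow nat_pow_closed)

lemma pow_mult_swap_class2:
  assumes u: "u \<in> carrier G" and v: "v \<in> carrier G"
    and cu: "comm G v u \<otimes> u = u \<otimes> comm G v u" and cv: "comm G v u \<otimes> v = v \<otimes> comm G v u"
  shows "v [^] (n::nat) \<otimes> u = comm G v u [^] n \<otimes> u \<otimes> v [^] n"
proof (induction n)
  case 0
  show ?case using u by simp
next
  case (Suc n)
  let ?c = "comm G v u"
  have c: "?c \<in> carrier G" using u v by simp
  have "v [^] Suc n \<otimes> u = v [^] n \<otimes> (?c \<otimes> u \<otimes> v)"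
    using u v mult_eq_comm_mult[OF v u] by (simp add: m_assoc)
  also have "\<dots> = ?c \<otimes> (v [^] n \<otimes> u) \<otimes> v"
    using u v c nat_pow_commute[OF c v cv, of 1 n] by (simp add: m_assoc[symmetric])
  also have "\<dots> = (?c \<otimes> ?c [^] n) \<otimes> u \<otimes> (v [^] n \<otimes> v)"
    using u v c Suc by (simp add: m_assoc)
  also have "\<dots> = ?c [^] Suc n \<otimes> u \<otimes> v [^] Suc n"
    by (simp only: nat_pow_Suc2[OF c, symmetric] nat_pow_Suc)
  finally show ?case .
qed

lemma pow_mult_class2:
  assumes u: "u \<in> carrier G" and v: "v \<in> carrier G"
    and cu: "comm G v u \<otimes> u = u \<otimes> comm G v u" and cv: "comm G v u \<otimes> v = v \<otimes> comm G v u"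
  shows "(u \<otimes> v) [^] (n::nat) = u [^] n \<otimes> v [^] n \<otimes> comm G v u [^] (n * (n - 1) div 2)"
proof (induction n)
  case 0
  show ?case by simp
next
  case (Suc n)
  let ?c = "comm G v u" and ?K = "n * (n - 1) div 2"
  have c: "?c \<in> carrier G" using u v by simp
  have cu': "?c [^] k \<otimes> u = u \<otimes> ?c [^] k" for k :: nat
    using nat_pow_commute[OF c u cu, of k 1] u c by simp
  have cv': "?c [^] k \<otimes> v [^] j = v [^] j \<otimes> ?c [^] k" for k j :: nat
    using nat_pow_commute[OF c v cv] by simp
  have "(u \<otimes> v) [^] Suc n = u [^] n \<otimes> (v [^] n \<otimes> u) \<otimes> ?c [^] ?K \<otimes> v"
    using Suc u v c by (simp add: m_assoc cu'[symmetric])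
  also have "\<dots> = u [^] n \<otimes> (u \<otimes> ?c [^] n) \<otimes> (v [^] n \<otimes> ?c [^] ?K) \<otimes> v"
    using u v c pow_mult_swap_class2[OF u v cu cv, of n] cu'[of n] by (simp add: m_assoc)
  also have "\<dots> = u [^] Suc n \<otimes> (?c [^] n \<otimes> v [^] Suc n) \<otimes> ?c [^] ?K"
    using u v c cv'[of ?K 1] by (simp add: m_assoc)
  also have "\<dots> = u [^] Suc n \<otimes> v [^] Suc n \<otimes> ?c [^] (n + ?K)"
    using u v c cv'[of n "Suc n"] by (simp add: m_assoc nat_pow_mult[symmetric])
  also have "n + ?K = Suc n * (Suc n - 1) div 2"
    by (induction n) auto
  finally show ?case .
qed

lemma comm_generate_closed:
  assumes S: "S \<subseteq> carrier G" and C: "subgroup C G" and C_central: "C \<subseteq> centralizer G (generate G S)"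
    and x: "x \<in> carrier G" and comm_x: "\<And>s. s \<in> S \<Longrightarrow> comm G x s \<in> C"
    and v: "v \<in> generate G S"
  shows "comm G x v \<in> C"
  using v
proof (induction rule: generate.induct)
  case one
  show ?case using x subgroup.one_closed[OF C] by simp
next
  case (incl h)
  then show ?case by (rule comm_x)
next
  case (inv h)
  have h: "h \<in> carrier G" "h \<in> generate G S" using inv S by (auto intro: generate.incl)
  have c: "inv (comm G x h) \<in> C" using subgroup.m_inv_closed[OF C comm_x[OF inv]] .
  then have "inv (comm G x h) \<otimes> h = h \<otimes> inv (comm G x h)"
    using C_central h by (auto intro: centralizer_commute)
  then have "comm G x (inv h) = inv (comm G x h)"
    using x h by (simp add: comm_inv_right m_assoc)
  then show ?case using c by simp
next
  case (eng h1 h2)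
  have h: "h1 \<in> carrier G" "h2 \<in> carrier G" using eng generate_incl[OF S] by auto
  have "comm G x h2 \<otimes> h1 = h1 \<otimes> comm G x h2"
    using C_central eng by (auto intro: centralizer_commute)
  then have "h1 \<otimes> comm G x h2 \<otimes> inv h1 = comm G x h2"
    using x h by (simp add: m_assoc flip: \<open>comm G x h2 \<otimes> h1 = h1 \<otimes> comm G x h2\<close>)
  then have "comm G x (h1 \<otimes> h2) = comm G x h1 \<otimes> comm G x h2"
    using x h by (simp add: comm_mult_right)
  then show ?case using eng subgroup.m_closed[OF C] by simp
qed

lemma generate_commute:
  assumes A: "A \<subseteq> carrier G" and B: "B \<subseteq> carrier G"
    and commute: "\<And>a b. a \<in> A \<Longrightarrow> b \<in> B \<Longrightarrow> a \<otimes> b = b \<otimes> a"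
  shows "generate G A \<subseteq> centralizer G (generate G B)"
proof -
  have "B \<subseteq> centralizer G A" using A B commute unfolding centralizer_def by auto
  then have "generate G B \<subseteq> centralizer G A" using A by (rule generate_subset_centralizer)
  then have "A \<subseteq> centralizer G (generate G B)"
    using A generate_incl[OF B] by (simp add: subset_centralizer_sym)
  then show ?thesis using generate_incl[OF B] by (rule generate_subset_centralizer)
qed

lemma generate_pow_eq_one_commuting:
  fixes e :: nat
  assumes Z: "Z \<subseteq> carrier G"
    and commute: "\<And>z z'. z \<in> generate G Z \<Longrightarrow> z' \<in> generate G Z \<Longrightarrow> z \<otimes> z' = z' \<otimes> z"
    and exp_Z: "\<And>z. z \<in> Z \<Longrightarrow> z [^] e = \<one>"
    and z: "z \<in> generate G Z"
  shows "z [^] e = \<one>"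
  using z
proof (induction rule: generate.induct)
  case (inv h)
  then show ?case using exp_Z Z by (auto simp: nat_pow_inv)
next
  case (eng h1 h2)
  then have "h1 \<otimes> h2 = h2 \<otimes> h1" "h1 \<in> carrier G" "h2 \<in> carrier G"
    using commute generate_incl[OF Z] by auto
  then show ?case using eng by (simp add: pow_mult_distrib)
qed (use exp_Z in simp_all)

lemma comm_generate_generate_closed:
  assumes S: "S \<subseteq> carrier G" and C: "subgroup C G" and C_central: "C \<subseteq> centralizer G (generate G S)"
    and comm_S: "\<And>s t. s \<in> S \<Longrightarrow> t \<in> S \<Longrightarrow> comm G s t \<in> C"
    and h': "h' \<in> generate G S" and h: "h \<in> generate G S"
  shows "comm G h' h \<in> C"
proof -
  have H: "generate G S \<subseteq> carrier G" using generate_incl[OF S] .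
  have comm_gen: "comm G s h \<in> C" if "s \<in> S" "h \<in> generate G S" for s h
    by (rule comm_generate_closed[OF S C C_central]) (use that S comm_S in \<open>auto\<close>)
  show ?thesis
  proof (rule comm_generate_closed[OF S C C_central _ _ h])
    show "h' \<in> carrier G" using h' H by auto
    show "comm G h' s \<in> C" if "s \<in> S" for s
    proof -
      have "inv (comm G s h') \<in> C" using subgroup.m_inv_closed[OF C comm_gen[OF that h']] .
      moreover have "s \<in> carrier G" "h' \<in> carrier G" using S H that h' by auto
      ultimately show ?thesis by (simp add: inv_comm)
    qed
  qed
qed

lemma generate_pow_eq_one_class2:
  fixes e m :: nat
  assumes S: "S \<subseteq> carrier G" and ZS: "Z \<subseteq> S"
    and comm_S: "\<And>s t. s \<in> S \<Longrightarrow> t \<in> S \<Longrightarrow> comm G s t \<in> Z"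
    and central: "\<And>z s. z \<in> Z \<Longrightarrow> s \<in> S \<Longrightarrow> z \<otimes> s = s \<otimes> z"
    and exp_Z: "\<And>z. z \<in> Z \<Longrightarrow> z [^] e = \<one>"
    and exp_S: "\<And>s. s \<in> S \<Longrightarrow> s [^] m = \<one>"
    and dvd: "e dvd m * (m - 1) div 2"
    and u: "u \<in> generate G S"
  shows "u [^] m = \<one>"
proof -
  let ?H = "generate G S" and ?C = "generate G Z"
  have Z: "Z \<subseteq> carrier G" using S ZS by blast
  have H: "?H \<subseteq> carrier G" using generate_incl[OF S] .
  have CH: "?C \<subseteq> ?H" using mono_generate[OF ZS] .
  have C_central: "?C \<subseteq> centralizer G ?H" using generate_commute[OF Z S central] .
  then have commute: "z \<otimes> h = h \<otimes> z" if "z \<in> ?C" "h \<in> ?H" for z h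
    using that by (auto intro: centralizer_commute)
  have exp_C: "z [^] e = \<one>" if "z \<in> ?C" for z
    using generate_pow_eq_one_commuting[OF Z _ exp_Z that] commute CH by blast
  show ?thesis
    using u
  proof (induction rule: generate.induct)
    case (inv h)
    then show ?case using exp_S S by (auto simp: nat_pow_inv)
  next
    case (eng h1 h2)
    let ?c = "comm G h2 h1"
    have h: "h1 \<in> carrier G" "h2 \<in> carrier G" using eng H by auto
    have c: "?c \<in> ?C"
      by (rule comm_generate_generate_closed[OF S generate_is_subgroup[OF Z] C_central])
         (use comm_S eng in \<open>auto intro: generate.incl\<close>)
    obtain q where q: "m * (m - 1) div 2 = e * q" using dvd by blast
    have "?c [^] (m * (m - 1) div 2) = \<one>"
      using q exp_C[OF c] c CH H by (auto simp: nat_pow_pow[symmetric])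
    moreover have "?c \<otimes> h1 = h1 \<otimes> ?c" "?c \<otimes> h2 = h2 \<otimes> ?c"
      using commute[OF c] eng by auto
    ultimately show ?case using pow_mult_class2[OF h] eng by simp
  qed (use exp_S in simp_all)
qed

lemma commuting_recurrence_closed_form:
  assumes S: "S \<in> carrier G" and Z: "Z \<in> carrier G" and ZS: "Z \<otimes> S = S \<otimes> Z"
    and A0: "A 0 = \<one>"
    and A_Suc: "\<And>n. A (Suc n) = A n \<otimes> (Z [^] n \<otimes> S) \<or> A (Suc n) = Z [^] n \<otimes> S \<otimes> A n"
  shows "A n = S [^] n \<otimes> Z [^] (n * (n - 1) div 2)"
proof (induction n)
  case 0
  show ?case using A0 by simp
next
  case (Suc n)
  let ?K = "n * (n - 1) div 2"
  have ZS_pow: "Z [^] k \<otimes> S [^] j = S [^] j \<otimes> Z [^] k" for k j :: nat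
    using nat_pow_commute[OF Z S ZS] .
  have right: "S [^] n \<otimes> Z [^] ?K \<otimes> (Z [^] n \<otimes> S) = S [^] Suc n \<otimes> Z [^] (?K + n)"
    using S Z ZS_pow[of "?K + n" 1] by (simp add: m_assoc nat_pow_mult[symmetric])
  have "Z [^] n \<otimes> S \<otimes> (S [^] n \<otimes> Z [^] ?K) = Z [^] n \<otimes> (S \<otimes> S [^] n) \<otimes> Z [^] ?K"
    using S Z by (simp add: m_assoc)
  also have "S \<otimes> S [^] n = S [^] Suc n" by (rule nat_pow_Suc2[OF S, symmetric])
  also have "Z [^] n \<otimes> S [^] Suc n = S [^] Suc n \<otimes> Z [^] n" by (rule ZS_pow)
  also have "S [^] Suc n \<otimes> Z [^] n \<otimes> Z [^] ?K = S [^] Suc n \<otimes> Z [^] (?K + n)"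
    using S Z by (simp add: m_assoc nat_pow_mult add.commute)
  finally have left: "Z [^] n \<otimes> S \<otimes> (S [^] n \<otimes> Z [^] ?K) = S [^] Suc n \<otimes> Z [^] (?K + n)" .
  have "Suc n * (Suc n - 1) div 2 = ?K + n" by (induction n) auto
  then show ?case using A_Suc[of n] Suc right left by auto
qed

end

definition step_exponent :: "nat \<Rightarrow> nat" where
  "step_exponent e = (if odd e then e else 2 * e)"

lemma dvd_step_exponent_triangle: "e dvd step_exponent e * (step_exponent e - 1) div 2"
proof (cases "odd e")
  case True
  then obtain q where "e - 1 = 2 * q" by (metis dvd_def odd_two_times_div_two_nat)
  then show ?thesis using True by (simp add: step_exponent_def)
next
  case False
  then have "step_exponent e * (step_exponent e - 1) div 2 = e * (2 * e - 1)"
    by (simp add: step_exponent_def)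
  then show ?thesis by simp
qed

lemma (in group) pow_step_exponent_eq_one:
  fixes e :: nat
  assumes S: "S \<in> carrier G" and Z: "Z \<in> carrier G" and ZS: "Z \<otimes> S = S \<otimes> Z"
    and Z_exp: "Z [^] e = \<one>"
    and A0: "A 0 = \<one>" and Ae: "A e = \<one>"
    and A_Suc: "\<And>n. A (Suc n) = A n \<otimes> (Z [^] n \<otimes> S) \<or> A (Suc n) = Z [^] n \<otimes> S \<otimes> A n"
  shows "S [^] step_exponent e = \<one>"
proof -
  let ?K = "e * (e - 1) div 2"
  have S_exp: "S [^] e \<otimes> Z [^] ?K = \<one>"
    using commuting_recurrence_closed_form[OF S Z ZS A0 A_Suc, of e] Ae by simp
  show ?thesis
  proof (cases "odd e")
    case True
    then obtain q where "?K = e * q"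
      by (metis dvd_mult_div_cancel dvd_step_exponent_triangle step_exponent_def)
    then have "Z [^] ?K = \<one>" using Z Z_exp by (simp add: nat_pow_pow[symmetric])
    then show ?thesis using True S_exp S by (simp add: step_exponent_def)
  next
    case False
    have "S [^] e = inv (Z [^] ?K)" using S_exp S Z by (simp add: inv_equality[symmetric])
    then have "S [^] (2 * e) = inv (Z [^] ?K \<otimes> Z [^] ?K)"
      using S Z by (simp add: mult_2 nat_pow_mult[symmetric] inv_mult_group)
    also have "Z [^] ?K \<otimes> Z [^] ?K = Z [^] (e * (e - 1))"
      using False Z by (simp add: nat_pow_mult) (metis dvd_mult_div_cancel even_mult_iff mult_2)
    also have "\<dots> = \<one>" using Z Z_exp by (simp add: nat_pow_pow[symmetric])
    finally show ?thesis using False by (simp add: step_exponent_def)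
  qed
qed

section \<open>The nonabelian tensor product as a group of word classes\<close>

definition tensor_class :: "('a, 'b) monoid_scheme \<Rightarrow> 'a set \<Rightarrow> 'a tword \<Rightarrow> 'a tword set" where
  "tensor_class G N w = {v. tensor_eq G N w v}"

definition tensor_group :: "('a, 'b) monoid_scheme \<Rightarrow> 'a set \<Rightarrow> 'a tword set monoid" where
  "tensor_group G N =
     \<lparr>carrier = tensor_class G N ` twords G N,
      monoid.mult = (\<lambda>A B. {v. \<exists>a\<in>A. \<exists>b\<in>B. tensor_eq G N (a @ b) v}),
      one = tensor_class G N []\<rparr>"

definition word_inv :: "'a tword \<Rightarrow> 'a tword" where
  "word_inv w = rev (map flip_letter w)"

definition tensor_gen :: "('a, 'b) monoid_scheme \<Rightarrow> 'a set \<Rightarrow> 'a \<Rightarrow> 'a \<Rightarrow> 'a tword set" where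
  "tensor_gen G N x g = tensor_class G N [(x, g, False)]"

lemma tensor_eq_append:
  "tensor_eq G N u u' \<Longrightarrow> tensor_eq G N v v' \<Longrightarrow> tensor_eq G N (u @ v) (u' @ v')"
  using tensor_eq.cong[of G N u u' "[]" v] tensor_eq.cong[of G N v v' u' "[]"]
  by (auto intro: tensor_eq.trans)

lemma tensor_class_eq_iff: "tensor_class G N u = tensor_class G N v \<longleftrightarrow> tensor_eq G N u v"
  unfolding tensor_class_def
  by (auto intro: tensor_eq.refl tensor_eq.sym tensor_eq.trans)

lemma tensor_group_mult:
  "tensor_class G N u \<otimes>\<^bsub>tensor_group G N\<^esub> tensor_class G N v = tensor_class G N (u @ v)"
  unfolding tensor_group_def tensor_class_def
  by (auto intro: tensor_eq.refl tensor_eq.trans tensor_eq_append)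

lemma tensor_group_one: "\<one>\<^bsub>tensor_group G N\<^esub> = tensor_class G N []"
  by (simp add: tensor_group_def)

lemma tensor_group_carrier: "carrier (tensor_group G N) = tensor_class G N ` twords G N"
  by (simp add: tensor_group_def)

lemma word_inv_append_tensor_eq: "tensor_eq G N (word_inv w @ w) []"
proof (induction w)
  case Nil
  show ?case by (simp add: word_inv_def tensor_eq.refl)
next
  case (Cons l w)
  have "tensor_eq G N (word_inv w @ [flip_letter l, l] @ w) (word_inv w @ [] @ w)"
    using tensor_eq.cong tensor_eq.cancel[of G N "flip_letter l"] by (cases l) fastforce
  then show ?case using Cons by (auto simp: word_inv_def intro: tensor_eq.trans)
qed

lemma twords_iff: "w \<in> twords G N \<longleftrightarrow> (\<forall>x g b. (x, g, b) \<in> set w \<longrightarrow> x \<in> N \<and> g \<in> carrier G)"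
  unfolding twords_def by fastforce

lemma twords_append [simp]: "u @ v \<in> twords G N \<longleftrightarrow> u \<in> twords G N \<and> v \<in> twords G N"
  unfolding twords_iff by (auto; blast)

lemma twords_Cons [simp]: "(x, g, b) # v \<in> twords G N \<longleftrightarrow> x \<in> N \<and> g \<in> carrier G \<and> v \<in> twords G N"
  unfolding twords_def by auto

lemma twords_Nil [simp]: "[] \<in> twords G N"
  by (simp add: twords_def)

lemma in_set_word_inv: "(x, g, b) \<in> set (word_inv w) \<longleftrightarrow> (x, g, \<not> b) \<in> set w"
  unfolding word_inv_def by force

lemma twords_word_inv: "w \<in> twords G N \<Longrightarrow> word_inv w \<in> twords G N"
  unfolding twords_iff in_set_word_inv by blast

lemma group_tensor_group: "group (tensor_group G N)"
proof (rule groupI)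
  fix x y z assume "x \<in> carrier (tensor_group G N)" "y \<in> carrier (tensor_group G N)"
    "z \<in> carrier (tensor_group G N)"
  then show "x \<otimes>\<^bsub>tensor_group G N\<^esub> y \<in> carrier (tensor_group G N)"
    and "x \<otimes>\<^bsub>tensor_group G N\<^esub> y \<otimes>\<^bsub>tensor_group G N\<^esub> z =
         x \<otimes>\<^bsub>tensor_group G N\<^esub> (y \<otimes>\<^bsub>tensor_group G N\<^esub> z)"
    by (auto simp: tensor_group_carrier tensor_group_mult)
next
  fix x assume "x \<in> carrier (tensor_group G N)"
  then obtain w where w: "w \<in> twords G N" "x = tensor_class G N w"
    by (auto simp: tensor_group_carrier)
  then show "\<one>\<^bsub>tensor_group G N\<^esub> \<otimes>\<^bsub>tensor_group G N\<^esub> x = x"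
    by (simp add: tensor_group_mult tensor_group_one)
  have "tensor_class G N (word_inv w) \<in> carrier (tensor_group G N)"
    using w twords_word_inv by (auto simp: tensor_group_carrier)
  moreover have "tensor_class G N (word_inv w) \<otimes>\<^bsub>tensor_group G N\<^esub> x = \<one>\<^bsub>tensor_group G N\<^esub>"
    using w word_inv_append_tensor_eq
    by (simp add: tensor_group_mult tensor_group_one tensor_class_eq_iff)
  ultimately show "\<exists>y\<in>carrier (tensor_group G N). y \<otimes>\<^bsub>tensor_group G N\<^esub> x = \<one>\<^bsub>tensor_group G N\<^esub>"
    by blast
qed (auto simp: tensor_group_carrier tensor_group_one)

lemma tensor_group_pow:
  "tensor_class G N w [^]\<^bsub>tensor_group G N\<^esub> (n::nat) = tensor_class G N (wpow w n)"
proof (induction n)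
  case 0
  show ?case by (simp add: wpow_def tensor_group_one)
next
  case (Suc n)
  then show ?case
    by (simp add: tensor_group_mult wpow_def replicate_append_same[symmetric])
qed

section \<open>Identities in the nonabelian tensor product\<close>

locale nonabelian_tensor = group +
  fixes N :: "'a set"
  assumes normal_N: "N \<lhd> G"
begin

abbreviation T where "T \<equiv> tensor_group G N"

abbreviation gen where "gen x g \<equiv> tensor_gen G N x g"

sublocale T: group T
  by (rule group_tensor_group)

lemma subgroup_N: "subgroup N G"
  using normal_N by (rule normal_imp_subgroup)

lemma N_carrier [simp]: "x \<in> N \<Longrightarrow> x \<in> carrier G"
  using subgroup.mem_carrier[OF subgroup_N] .

lemma N_closed [simp]:
  "\<one> \<in> N" "x \<in> N \<Longrightarrow> inv x \<in> N" "x \<in> N \<Longrightarrow> y \<in> N \<Longrightarrow> x \<otimes> y \<in> N"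
  using subgroup_N by (auto intro: subgroup.one_closed subgroup.m_inv_closed subgroup.m_closed)

lemma N_conjg [simp]: "x \<in> N \<Longrightarrow> h \<in> carrier G \<Longrightarrow> conjg G h x \<in> N"
  unfolding conjg_def by (rule normal.inv_op_closed2[OF normal_N])

lemma comm_N [simp]: "x \<in> N \<Longrightarrow> g \<in> carrier G \<Longrightarrow> comm G x g \<in> N"
  using N_conjg[of "inv x" g] by (simp add: comm_def conjg_def m_assoc)

lemma gen_carrier [simp]: "x \<in> N \<Longrightarrow> g \<in> carrier G \<Longrightarrow> gen x g \<in> carrier T"
  unfolding tensor_gen_def tensor_group_carrier by (rule imageI) simp

lemma gen_mult_left:
  "x \<in> N \<Longrightarrow> x' \<in> N \<Longrightarrow> g \<in> carrier G \<Longrightarrow>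
    gen (x \<otimes> x') g = gen (conjg G x x') (conjg G x g) \<otimes>\<^bsub>T\<^esub> gen x g"
  unfolding tensor_gen_def tensor_group_mult tensor_class_eq_iff by (simp add: tensor_eq.rel1)

lemma gen_mult_right:
  "x \<in> N \<Longrightarrow> g \<in> carrier G \<Longrightarrow> g' \<in> carrier G \<Longrightarrow>
    gen x (g \<otimes> g') = gen x g \<otimes>\<^bsub>T\<^esub> gen (conjg G g x) (conjg G g g')"
  unfolding tensor_gen_def tensor_group_mult tensor_class_eq_iff by (simp add: tensor_eq.rel2)

lemma gen_one_left [simp]: "g \<in> carrier G \<Longrightarrow> gen \<one> g = \<one>\<^bsub>T\<^esub>"
  using gen_mult_left[of \<one> \<one> g] by simp

lemma gen_one_right [simp]: "x \<in> N \<Longrightarrow> gen x \<one> = \<one>\<^bsub>T\<^esub>"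
  using gen_mult_right[of x \<one> \<one>] by simp

lemma gen_inv_right:
  assumes x: "x \<in> N" and g: "g \<in> carrier G"
  shows "gen x (inv g) = inv\<^bsub>T\<^esub> (gen (conjg G (inv g) x) g)"
proof -
  have "gen x (inv g) \<otimes>\<^bsub>T\<^esub> gen (conjg G (inv g) x) g = gen x (inv g \<otimes> g)"
    using gen_mult_right[of x "inv g" g] x g by (simp add: conjg_def m_assoc)
  also have "\<dots> = \<one>\<^bsub>T\<^esub>" using x g by simp
  finally show ?thesis using x g by (simp add: T.inv_equality[symmetric])
qed

lemma gen_mult_mult_expand1:
  assumes x: "x \<in> N" and y: "y \<in> N" and g: "g \<in> carrier G" and h: "h \<in> carrier G"
  shows "gen (x \<otimes> y) (g \<otimes> h) =
    gen (conjg G x y) (conjg G x g) \<otimes>\<^bsub>T\<^esub> gen (conjg G (x \<otimes> g) y) (conjg G (x \<otimes> g) h)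
      \<otimes>\<^bsub>T\<^esub> (gen x g \<otimes>\<^bsub>T\<^esub> gen (conjg G g x) (conjg G g h))"
proof -
  have "gen (x \<otimes> y) (g \<otimes> h) = gen (conjg G x y) (conjg G x g \<otimes> conjg G x h) \<otimes>\<^bsub>T\<^esub> gen x (g \<otimes> h)"
    using gen_mult_left[of x y "g \<otimes> h"] x y g h by (simp add: conjg_mult)
  then show ?thesis
    using gen_mult_right[of "conjg G x y" "conjg G x g" "conjg G x h"] gen_mult_right[of x g h] x y g h
    by (simp add: conjg_conjg_conjg)
qed

lemma gen_mult_mult_expand2:
  assumes x: "x \<in> N" and y: "y \<in> N" and g: "g \<in> carrier G" and h: "h \<in> carrier G"
  shows "gen (x \<otimes> y) (g \<otimes> h) =
    gen (conjg G x y) (conjg G x g) \<otimes>\<^bsub>T\<^esub> gen x g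
      \<otimes>\<^bsub>T\<^esub> (gen (conjg G (g \<otimes> x) y) (conjg G (g \<otimes> x) h) \<otimes>\<^bsub>T\<^esub> gen (conjg G g x) (conjg G g h))"
proof -
  have "gen (x \<otimes> y) (g \<otimes> h) = gen (x \<otimes> y) g \<otimes>\<^bsub>T\<^esub> gen (conjg G g x \<otimes> conjg G g y) (conjg G g h)"
    using gen_mult_right[of "x \<otimes> y" g h] x y g h by (simp add: conjg_mult)
  then show ?thesis
    using gen_mult_left[of "conjg G g x" "conjg G g y" "conjg G g h"] gen_mult_left[of x y g] x y g h
    by (simp add: conjg_conjg_conjg)
qed

lemma gen_conj_twisted:
  assumes x: "x \<in> N" and y: "y \<in> N" and g: "g \<in> carrier G" and h: "h \<in> carrier G"
  shows "gen x g \<otimes>\<^bsub>T\<^esub> gen (conjg G (g \<otimes> x) y) (conjg G (g \<otimes> x) h) \<otimes>\<^bsub>T\<^esub> inv\<^bsub>T\<^esub> (gen x g)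
    = gen (conjg G (x \<otimes> g) y) (conjg G (x \<otimes> g) h)"
proof -
  let ?A = "gen (conjg G x y) (conjg G x g)" and ?a = "gen x g"
    and ?B1 = "gen (conjg G (x \<otimes> g) y) (conjg G (x \<otimes> g) h)"
    and ?B2 = "gen (conjg G (g \<otimes> x) y) (conjg G (g \<otimes> x) h)"
    and ?D = "gen (conjg G g x) (conjg G g h)"
  have c: "?A \<in> carrier T" "?a \<in> carrier T" "?B1 \<in> carrier T" "?B2 \<in> carrier T" "?D \<in> carrier T"
    using x y g h by simp_all
  have "?A \<otimes>\<^bsub>T\<^esub> ((?B1 \<otimes>\<^bsub>T\<^esub> ?a) \<otimes>\<^bsub>T\<^esub> ?D) = ?A \<otimes>\<^bsub>T\<^esub> ((?a \<otimes>\<^bsub>T\<^esub> ?B2) \<otimes>\<^bsub>T\<^esub> ?D)"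
    using gen_mult_mult_expand1[OF assms] gen_mult_mult_expand2[OF assms] c by (simp add: T.m_assoc)
  then have "?a \<otimes>\<^bsub>T\<^esub> ?B2 = ?B1 \<otimes>\<^bsub>T\<^esub> ?a" using c by simp
  then have "?a \<otimes>\<^bsub>T\<^esub> ?B2 \<otimes>\<^bsub>T\<^esub> inv\<^bsub>T\<^esub> ?a = ?B1 \<otimes>\<^bsub>T\<^esub> ?a \<otimes>\<^bsub>T\<^esub> inv\<^bsub>T\<^esub> ?a"
    by simp
  then show ?thesis using c by (simp add: T.m_assoc)
qed

lemma gen_conj:
  assumes x: "x \<in> N" and y: "y \<in> N" and g: "g \<in> carrier G" and h: "h \<in> carrier G"
  shows "gen x g \<otimes>\<^bsub>T\<^esub> gen y h \<otimes>\<^bsub>T\<^esub> inv\<^bsub>T\<^esub> (gen x g)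
    = gen (conjg G (comm G x g) y) (conjg G (comm G x g) h)"
proof -
  let ?q = "inv (g \<otimes> x)"
  have q: "?q \<in> carrier G" using x g by simp
  have "comm G x g = x \<otimes> g \<otimes> ?q" using x g by (simp add: comm_def inv_mult_group m_assoc)
  then have "conjg G (comm G x g) z = conjg G (x \<otimes> g) (conjg G ?q z)" if "z \<in> carrier G" for z
    using that x g by (simp add: conjg_conjg)
  then show ?thesis
    using gen_conj_twisted[of x "conjg G ?q y" g "conjg G ?q h"] x y g h q
    by (simp add: conjg_conjg)
qed

lemma gen_conj_inv:
  assumes x: "x \<in> N" and y: "y \<in> N" and g: "g \<in> carrier G" and h: "h \<in> carrier G"
  shows "inv\<^bsub>T\<^esub> (gen x g) \<otimes>\<^bsub>T\<^esub> gen y h \<otimes>\<^bsub>T\<^esub> gen x g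
    = gen (conjg G (inv (comm G x g)) y) (conjg G (inv (comm G x g)) h)"
proof -
  let ?c = "inv (comm G x g)"
  have c: "?c \<in> carrier G" using x g by simp
  let ?B = "gen (conjg G ?c y) (conjg G ?c h)"
  have "gen x g \<otimes>\<^bsub>T\<^esub> ?B \<otimes>\<^bsub>T\<^esub> inv\<^bsub>T\<^esub> (gen x g) = gen y h"
    using gen_conj[of x "conjg G ?c y" g "conjg G ?c h"] x y g h c by simp
  then have "inv\<^bsub>T\<^esub> (gen x g) \<otimes>\<^bsub>T\<^esub> gen y h \<otimes>\<^bsub>T\<^esub> gen x g
      = inv\<^bsub>T\<^esub> (gen x g) \<otimes>\<^bsub>T\<^esub> (gen x g \<otimes>\<^bsub>T\<^esub> ?B \<otimes>\<^bsub>T\<^esub> inv\<^bsub>T\<^esub> (gen x g)) \<otimes>\<^bsub>T\<^esub> gen x g"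
    by simp
  also have "\<dots> = ?B" using x y g h c by (simp add: T.m_assoc)
  finally show ?thesis .
qed

lemma gen_comm_right:
  assumes k: "k \<in> N" and y: "y \<in> N" and h: "h \<in> carrier G"
  shows "gen k (comm G y h) =
    gen k (conjg G y h) \<otimes>\<^bsub>T\<^esub> (gen y h \<otimes>\<^bsub>T\<^esub> inv\<^bsub>T\<^esub> (gen k h) \<otimes>\<^bsub>T\<^esub> inv\<^bsub>T\<^esub> (gen y h))"
proof -
  let ?w = "conjg G y h" and ?c = "comm G y h"
  have w: "?w \<in> carrier G" and c: "?c \<in> carrier G" using y h by simp_all
  have c_eq: "?c = ?w \<otimes> inv h" using y h by (simp add: comm_eq_conjg_mult_inv)
  have conj_eq: "conjg G (inv (conjg G ?w h)) (conjg G ?w k) = conjg G ?c k" "conjg G ?w h = conjg G ?c h"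
    using w h k c_eq by (simp_all add: conjg_conjg) (simp_all add: conjg_def inv_mult_group m_assoc)
  have "gen k ?c = gen k ?w \<otimes>\<^bsub>T\<^esub> gen (conjg G ?w k) (inv (conjg G ?w h))"
    using gen_mult_right[of k ?w "inv h"] c_eq k w h by (simp add: conjg_inv)
  also have "gen (conjg G ?w k) (inv (conjg G ?w h))
      = inv\<^bsub>T\<^esub> (gen (conjg G (inv (conjg G ?w h)) (conjg G ?w k)) (conjg G ?w h))"
    by (rule gen_inv_right) (use k w h in simp_all)
  also have "\<dots> = inv\<^bsub>T\<^esub> (gen (conjg G ?c k) (conjg G ?c h))"
    by (subst conj_eq(1)) (simp only: conj_eq(2))
  also have "gen (conjg G ?c k) (conjg G ?c h) = gen y h \<otimes>\<^bsub>T\<^esub> gen k h \<otimes>\<^bsub>T\<^esub> inv\<^bsub>T\<^esub> (gen y h)"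
    using gen_conj[OF y k h h] ..
  finally show ?thesis using k y h by (simp add: T.inv_mult_group T.m_assoc)
qed

lemma gen_conjg_mult_gen:
  assumes k: "k \<in> N" and y: "y \<in> N" and h: "h \<in> carrier G"
  shows "gen (conjg G k y) (conjg G k h) \<otimes>\<^bsub>T\<^esub> gen k h = gen k (conjg G y h) \<otimes>\<^bsub>T\<^esub> gen y h"
proof -
  let ?k' = "conjg G (inv y) k"
  have "k \<otimes> y = y \<otimes> ?k'" using k y by (simp add: conjg_def m_assoc)
  then have "gen (k \<otimes> y) h = gen (y \<otimes> ?k') h" by simp
  then show ?thesis using gen_mult_left[of k y h] gen_mult_left[of y ?k' h] k y h by simp
qed

lemma gen_conjg:
  assumes k: "k \<in> N" and y: "y \<in> N" and h: "h \<in> carrier G"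
  shows "gen (conjg G k y) (conjg G k h) = gen k (comm G y h) \<otimes>\<^bsub>T\<^esub> gen y h"
proof -
  have "gen k (comm G y h) \<otimes>\<^bsub>T\<^esub> gen y h = gen k (conjg G y h) \<otimes>\<^bsub>T\<^esub> gen y h \<otimes>\<^bsub>T\<^esub> inv\<^bsub>T\<^esub> (gen k h)"
    using gen_comm_right[OF assms] k y h by (simp add: T.m_assoc)
  also have "\<dots> = gen (conjg G k y) (conjg G k h)"
    using gen_conjg_mult_gen[OF assms, symmetric] k y h by (simp add: T.m_assoc)
  finally show ?thesis by simp
qed

lemma gen_conj_eq_gen_comm_mult:
  assumes x: "x \<in> N" and g: "g \<in> carrier G" and y: "y \<in> N" and h: "h \<in> carrier G"
  shows "gen x g \<otimes>\<^bsub>T\<^esub> gen y h \<otimes>\<^bsub>T\<^esub> inv\<^bsub>T\<^esub> (gen x g) = gen (comm G x g) (comm G y h) \<otimes>\<^bsub>T\<^esub> gen y h"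
  using gen_conj[OF x y g h] gen_conjg[of "comm G x g" y h] assms by simp

lemma comm_gen_gen:
  assumes x: "x \<in> N" and g: "g \<in> carrier G" and y: "y \<in> N" and h: "h \<in> carrier G"
  shows "comm T (gen x g) (gen y h) = gen (comm G x g) (comm G y h)"
  using gen_conj_eq_gen_comm_mult[OF assms] assms by (simp add: comm_def[of T] T.m_assoc)

section \<open>A filtration along the derived series\<close>

text \<open>\<^term>\<open>generate T (tensor_gens K)\<close> is the subgroup T_K of the proof sketch; the elements of
  \<^term>\<open>tensor_gens_inner K\<close> generate the image of K \<otimes> K.\<close>

definition tensor_gens :: "'a set \<Rightarrow> 'a tword set set" where
  "tensor_gens K = {gen x g | x g. x \<in> K \<and> g \<in> carrier G} \<union> {gen x k | x k. x \<in> N \<and> k \<in> K}"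

definition tensor_gens_inner :: "'a set \<Rightarrow> 'a tword set set" where
  "tensor_gens_inner K = {gen k c | k c. k \<in> K \<and> c \<in> K}"

lemma tensor_gensE:
  assumes "t \<in> tensor_gens K" and "K \<subseteq> N"
  obtains x g where "t = gen x g" "x \<in> N" "g \<in> carrier G" "x \<in> K \<or> g \<in> K"
  using assms unfolding tensor_gens_def by (auto dest: N_carrier)

lemma tensor_gens_subset_carrier: "K \<subseteq> N \<Longrightarrow> tensor_gens K \<subseteq> carrier T"
  by (auto elim: tensor_gensE)

lemma tensor_gens_inner_subset: "K \<subseteq> N \<Longrightarrow> tensor_gens_inner K \<subseteq> tensor_gens K"
  unfolding tensor_gens_def tensor_gens_inner_def by auto

lemma gen_in_tensor_gens:
  "x \<in> K \<Longrightarrow> g \<in> carrier G \<Longrightarrow> gen x g \<in> tensor_gens K"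
  "x \<in> N \<Longrightarrow> k \<in> K \<Longrightarrow> gen x k \<in> tensor_gens K"
  unfolding tensor_gens_def by auto

lemma inv_gen:
  assumes "x \<in> N" "g \<in> carrier G"
  shows "inv\<^bsub>T\<^esub> (gen x g) = tensor_class G N [(x, g, True)]"
proof (rule T.inv_equality)
  show "tensor_class G N [(x, g, True)] \<otimes>\<^bsub>T\<^esub> gen x g = \<one>\<^bsub>T\<^esub>"
    using tensor_eq.cancel[of G N "(x, g, True)"]
    by (simp add: tensor_gen_def tensor_group_mult tensor_group_one tensor_class_eq_iff)
  show "tensor_class G N [(x, g, True)] \<in> carrier T"
    unfolding tensor_group_carrier by (rule imageI) (simp add: assms)
qed (simp add: assms)

lemma carrier_T_eq_generate: "carrier T = generate T (tensor_gens N)"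
proof
  show "generate T (tensor_gens N) \<subseteq> carrier T"
    by (rule T.generate_incl[OF tensor_gens_subset_carrier[OF order_refl]])
next
  have "tensor_class G N w \<in> generate T (tensor_gens N)" if "w \<in> twords G N" for w
    using that
  proof (induction w)
    case Nil
    show ?case using generate.one[of T "tensor_gens N"] unfolding tensor_group_one by simp
  next
    case (Cons l w)
    obtain x g b where l: "l = (x, g, b)" by (cases l)
    have xg: "x \<in> N" "g \<in> carrier G" and w: "w \<in> twords G N" using Cons.prems l by auto
    have gen: "gen x g \<in> tensor_gens N" using gen_in_tensor_gens(1)[OF xg] .
    have "tensor_class G N [l] \<in> generate T (tensor_gens N)"
    proof (cases b)
      case True
      then have "tensor_class G N [l] = inv\<^bsub>T\<^esub> (gen x g)" using l inv_gen[OF xg] by simp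
      then show ?thesis using generate.inv[OF gen] by simp
    next
      case False
      then have "tensor_class G N [l] = gen x g" using l by (simp add: tensor_gen_def)
      then show ?thesis using generate.incl[OF gen] by simp
    qed
    then have "tensor_class G N [l] \<otimes>\<^bsub>T\<^esub> tensor_class G N w \<in> generate T (tensor_gens N)"
      using Cons.IH[OF w] by (rule generate.eng)
    then show ?case by (simp add: tensor_group_mult)
  qed
  then show "carrier T \<subseteq> generate T (tensor_gens N)" by (auto simp: tensor_group_carrier)
qed

lemma generate_tensor_gens_one: "generate T (tensor_gens {\<one>}) = {\<one>\<^bsub>T\<^esub>}"
proof -
  have "tensor_gens {\<one>} \<subseteq> {\<one>\<^bsub>T\<^esub>}" unfolding tensor_gens_def by auto
  then have "generate T (tensor_gens {\<one>}) \<subseteq> generate T {\<one>\<^bsub>T\<^esub>}"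
    by (rule T.mono_generate)
  then have "generate T (tensor_gens {\<one>}) \<subseteq> {\<one>\<^bsub>T\<^esub>}"
    by (simp add: T.generate_one)
  then show ?thesis using generate.one[of T] by blast
qed

lemma normal_generate_tensor_gens:
  assumes L: "L \<lhd> G" and LN: "L \<subseteq> N"
  shows "generate T (tensor_gens L) \<lhd> T"
proof (rule T.normal_generateI[OF tensor_gens_subset_carrier[OF LN]])
  have conj_gens: "gen (conjg G c y) (conjg G c h) \<in> tensor_gens L"
    if "c \<in> carrier G" "y \<in> N" "h \<in> carrier G" "y \<in> L \<or> h \<in> L" for c y h
    using that normal_conjg_closed[OF L] gen_in_tensor_gens by auto
  fix t u assume t: "t \<in> tensor_gens L" and u: "u \<in> carrier T"
  show "u \<otimes>\<^bsub>T\<^esub> t \<otimes>\<^bsub>T\<^esub> inv\<^bsub>T\<^esub> u \<in> tensor_gens L"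
  proof (rule T.conj_mem_of_generate[OF tensor_gens_subset_carrier[OF order_refl]
        tensor_gens_subset_carrier[OF LN] _ _ _ t])
    fix s t assume s: "s \<in> tensor_gens N" and t: "t \<in> tensor_gens L"
    obtain x g where s_eq: "s = gen x g" "x \<in> N" "g \<in> carrier G"
      by (rule tensor_gensE[OF s order_refl])
    obtain y h where t_eq: "t = gen y h" "y \<in> N" "h \<in> carrier G" "y \<in> L \<or> h \<in> L"
      by (rule tensor_gensE[OF t LN])
    have c: "comm G x g \<in> carrier G" "inv (comm G x g) \<in> carrier G" using s_eq by simp_all
    show "s \<otimes>\<^bsub>T\<^esub> t \<otimes>\<^bsub>T\<^esub> inv\<^bsub>T\<^esub> s \<in> tensor_gens L"
      using gen_conj[of x y g h] conj_gens[OF c(1) t_eq(2-4)] s_eq t_eq by simp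
    show "inv\<^bsub>T\<^esub> s \<otimes>\<^bsub>T\<^esub> t \<otimes>\<^bsub>T\<^esub> s \<in> tensor_gens L"
      using gen_conj_inv[of x y g h] conj_gens[OF c(2) t_eq(2-4)] s_eq t_eq by simp
  next
    show "u \<in> generate T (tensor_gens N)" using u carrier_T_eq_generate by simp
  qed
qed

end

text \<open>Q stands for T/T_L; the only property of the quotient map p that is used is that it kills
  the generators y \<otimes> h with h in L.\<close>

locale tensor_quotient = nonabelian_tensor +
  fixes K L :: "'a set" and Q :: "('c, 'd) monoid_scheme" and p :: "'a tword set \<Rightarrow> 'c" and e :: nat
  assumes normal_K: "K \<lhd> G" and K_N: "K \<subseteq> N"
    and comm_K: "\<And>k c. k \<in> K \<Longrightarrow> c \<in> K \<Longrightarrow> comm G k c \<in> L"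
    and hom_p: "group_hom T Q p"
    and p_gen_L: "\<And>y h. y \<in> N \<Longrightarrow> h \<in> L \<Longrightarrow> p (gen y h) = \<one>\<^bsub>Q\<^esub>"
    and exp_N: "\<And>x. x \<in> N \<Longrightarrow> x [^] e = \<one>"
begin

sublocale P: group_hom T Q p
  by (rule hom_p)

lemma K_carrier [simp]: "k \<in> K \<Longrightarrow> k \<in> carrier G" and K_in_N [simp]: "k \<in> K \<Longrightarrow> k \<in> N"
  using K_N by auto

lemma p_gen_pow_left:
  assumes k: "k \<in> K" and c: "c \<in> K"
  shows "p (gen (k [^] n) c) = p (gen k c) [^]\<^bsub>Q\<^esub> (n::nat)"
proof (induction n)
  case 0
  show ?case using c by simp
next
  case (Suc n)
  have kn: "k [^] n \<in> N" using k by (induction n) simp_all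
  have "gen (k [^] Suc n) c = gen (k [^] n) (comm G k c) \<otimes>\<^bsub>T\<^esub> gen k c \<otimes>\<^bsub>T\<^esub> gen (k [^] n) c"
    using gen_mult_left[of "k [^] n" k c] gen_conjg[of "k [^] n" k c] kn k c by simp
  then have "p (gen (k [^] Suc n) c) = p (gen k c) \<otimes>\<^bsub>Q\<^esub> p (gen (k [^] n) c)"
    using p_gen_L[OF kn comm_K[OF k c]] kn k c by simp
  then show ?case using Suc k c P.H.nat_pow_Suc2[of "p (gen k c)" n] by simp
qed

lemma p_gens_central:
  assumes a: "a \<in> tensor_gens K" and z: "z \<in> tensor_gens_inner K"
  shows "p a \<otimes>\<^bsub>Q\<^esub> p z = p z \<otimes>\<^bsub>Q\<^esub> p a"
proof -
  obtain x g where a_eq: "a = gen x g" "x \<in> N" "g \<in> carrier G" by (rule tensor_gensE[OF a K_N])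
  obtain k c where z_eq: "z = gen k c" "k \<in> K" "c \<in> K" using z by (auto simp: tensor_gens_inner_def)
  have "p a \<otimes>\<^bsub>Q\<^esub> p z \<otimes>\<^bsub>Q\<^esub> inv\<^bsub>Q\<^esub> (p a) = p (a \<otimes>\<^bsub>T\<^esub> z \<otimes>\<^bsub>T\<^esub> inv\<^bsub>T\<^esub> a)"
    using a_eq z_eq by simp
  also have "\<dots> = p z"
    using gen_conj_eq_gen_comm_mult[of x g k c] p_gen_L[of "comm G x g" "comm G k c"] comm_K a_eq z_eq
    by simp
  finally show ?thesis using a_eq z_eq by (simp add: P.H.m_assoc flip: P.H.inv_solve_right')
qed

lemma comm_p_gens:
  assumes a: "a \<in> tensor_gens K" and b: "b \<in> tensor_gens K"
  shows "comm Q (p a) (p b) \<in> p ` tensor_gens_inner K"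
proof -
  obtain x g where a_eq: "a = gen x g" "x \<in> N" "g \<in> carrier G" "x \<in> K \<or> g \<in> K"
    by (rule tensor_gensE[OF a K_N])
  obtain y h where b_eq: "b = gen y h" "y \<in> N" "h \<in> carrier G" "y \<in> K \<or> h \<in> K"
    by (rule tensor_gensE[OF b K_N])
  have "comm Q (p a) (p b) = p (comm T a b)"
    using a_eq b_eq by (simp add: comm_def)
  also have "comm T a b = gen (comm G x g) (comm G y h)"
    using comm_gen_gen a_eq b_eq by simp
  moreover have "gen (comm G x g) (comm G y h) \<in> tensor_gens_inner K"
    using comm_mem_normal[OF normal_K, of x g] comm_mem_normal[OF normal_K, of y h] a_eq b_eq
    unfolding tensor_gens_inner_def by auto
  ultimately show ?thesis by simp
qed

lemma p_gens_inner_exp: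
  assumes "z \<in> tensor_gens_inner K"
  shows "p z [^]\<^bsub>Q\<^esub> e = \<one>\<^bsub>Q\<^esub>"
proof -
  obtain k c where z_eq: "z = gen k c" "k \<in> K" "c \<in> K"
    using assms by (auto simp: tensor_gens_inner_def)
  then show ?thesis using p_gen_pow_left[of k c e] exp_N by simp
qed

lemma p_gen_exp_left:
  assumes x: "x \<in> K" and g: "g \<in> carrier G"
  shows "p (gen x g) [^]\<^bsub>Q\<^esub> step_exponent e = \<one>\<^bsub>Q\<^esub>"
proof (rule P.H.pow_step_exponent_eq_one[where A = "\<lambda>n. p (gen (x [^] n) g)"])
  let ?c = "comm G x g"
  have c: "?c \<in> K" using comm_mem_normal[OF normal_K] x g by simp
  have x_pow: "x [^] n \<in> N" for n :: nat using x by (induction n) simp_all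
  have "gen x g \<in> tensor_gens K" "gen x ?c \<in> tensor_gens_inner K"
    using x g c by (auto simp: tensor_gens_inner_def intro: gen_in_tensor_gens)
  then show "p (gen x ?c) \<otimes>\<^bsub>Q\<^esub> p (gen x g) = p (gen x g) \<otimes>\<^bsub>Q\<^esub> p (gen x ?c)"
    by (rule p_gens_central[symmetric])
  show "p (gen x ?c) [^]\<^bsub>Q\<^esub> e = \<one>\<^bsub>Q\<^esub>"
    using p_gens_inner_exp x c by (auto simp: tensor_gens_inner_def)
  show "p (gen (x [^] e) g) = \<one>\<^bsub>Q\<^esub>" using exp_N x g by simp
  fix n
  have "gen (x [^] Suc n) g = gen (x [^] n) ?c \<otimes>\<^bsub>T\<^esub> gen x g \<otimes>\<^bsub>T\<^esub> gen (x [^] n) g"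
    using gen_mult_left[of "x [^] n" x g] gen_conjg[of "x [^] n" x g] x_pow x g by simp
  then show "p (gen (x [^] Suc n) g) = p (gen (x [^] n) g) \<otimes>\<^bsub>Q\<^esub> (p (gen x ?c) [^]\<^bsub>Q\<^esub> n \<otimes>\<^bsub>Q\<^esub> p (gen x g))
    \<or> p (gen (x [^] Suc n) g) = p (gen x ?c) [^]\<^bsub>Q\<^esub> n \<otimes>\<^bsub>Q\<^esub> p (gen x g) \<otimes>\<^bsub>Q\<^esub> p (gen (x [^] n) g)"
    using p_gen_pow_left[OF x c] x_pow x g c by simp
qed (use x g in simp_all)

lemma p_gen_exp_right:
  assumes x: "x \<in> N" and g: "g \<in> K"
  shows "p (gen x g) [^]\<^bsub>Q\<^esub> step_exponent e = \<one>\<^bsub>Q\<^esub>"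
proof (rule P.H.pow_step_exponent_eq_one[where A = "\<lambda>n. p (gen x (g [^] n))"])
  let ?c = "comm G x g"
  have c: "?c \<in> K" using comm_mem_normal[OF normal_K] x g by simp
  have g_pow: "g [^] n \<in> N" for n :: nat using g by (induction n) simp_all
  have "gen x g \<in> tensor_gens K" "gen g ?c \<in> tensor_gens_inner K"
    using x g c by (auto simp: tensor_gens_inner_def intro: gen_in_tensor_gens)
  then show "p (gen g ?c) \<otimes>\<^bsub>Q\<^esub> p (gen x g) = p (gen x g) \<otimes>\<^bsub>Q\<^esub> p (gen g ?c)"
    by (rule p_gens_central[symmetric])
  show "p (gen g ?c) [^]\<^bsub>Q\<^esub> e = \<one>\<^bsub>Q\<^esub>"
    using p_gens_inner_exp g c by (auto simp: tensor_gens_inner_def)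
  show "p (gen x (g [^] e)) = \<one>\<^bsub>Q\<^esub>" using exp_N x g by simp
  fix n
  have "gen x (g [^] Suc n) = gen x (g [^] n) \<otimes>\<^bsub>T\<^esub> (gen (g [^] n) ?c \<otimes>\<^bsub>T\<^esub> gen x g)"
    using gen_mult_right[of x "g [^] n" g] gen_conjg[of "g [^] n" x g] g_pow x g by simp
  then show "p (gen x (g [^] Suc n)) = p (gen x (g [^] n)) \<otimes>\<^bsub>Q\<^esub> (p (gen g ?c) [^]\<^bsub>Q\<^esub> n \<otimes>\<^bsub>Q\<^esub> p (gen x g))
    \<or> p (gen x (g [^] Suc n)) = p (gen g ?c) [^]\<^bsub>Q\<^esub> n \<otimes>\<^bsub>Q\<^esub> p (gen x g) \<otimes>\<^bsub>Q\<^esub> p (gen x (g [^] n))"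
    using p_gen_pow_left[OF g c] g_pow x g c by simp
qed (use x g in simp_all)

lemma p_gens_exp: "a \<in> tensor_gens K \<Longrightarrow> p a [^]\<^bsub>Q\<^esub> step_exponent e = \<one>\<^bsub>Q\<^esub>"
  by (elim tensor_gensE[OF _ K_N]) (auto simp: p_gen_exp_left p_gen_exp_right)

lemma p_generate_tensor_gens_exp:
  assumes u: "u \<in> generate T (tensor_gens K)"
  shows "p u [^]\<^bsub>Q\<^esub> step_exponent e = \<one>\<^bsub>Q\<^esub>"
proof (rule P.H.generate_pow_eq_one_class2)
  show "p u \<in> generate Q (p ` tensor_gens K)"
    using P.generate_img[OF tensor_gens_subset_carrier[OF K_N]] u by simp
  show "p ` tensor_gens K \<subseteq> carrier Q" using tensor_gens_subset_carrier[OF K_N] by auto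
  show "p ` tensor_gens_inner K \<subseteq> p ` tensor_gens K" using tensor_gens_inner_subset[OF K_N] by auto
  show "e dvd step_exponent e * (step_exponent e - 1) div 2" by (rule dvd_step_exponent_triangle)
qed (use comm_p_gens p_gens_central p_gens_inner_exp p_gens_exp tensor_gens_inner_subset[OF K_N]
     in \<open>auto simp: subset_iff\<close>)

end

context nonabelian_tensor
begin

lemma pow_step_exponent_mem_generate_tensor_gens:
  assumes K: "K \<lhd> G" "K \<subseteq> N" and L: "L \<lhd> G" "L \<subseteq> N"
    and comm_K: "\<And>k c. k \<in> K \<Longrightarrow> c \<in> K \<Longrightarrow> comm G k c \<in> L"
    and exp_N: "\<And>x. x \<in> N \<Longrightarrow> x [^] e = \<one>"
    and u: "u \<in> generate T (tensor_gens K)"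
  shows "u [^]\<^bsub>T\<^esub> step_exponent e \<in> generate T (tensor_gens L)"
proof -
  let ?H = "generate T (tensor_gens L)"
  interpret H: normal ?H T using normal_generate_tensor_gens[OF L] .
  have hom: "group_hom T (T Mod ?H) (\<lambda>a. ?H #>\<^bsub>T\<^esub> a)"
    using H.r_coset_hom_Mod H.factorgroup_is_group
    by (intro group_hom.intro group_hom_axioms.intro) (simp_all add: T.is_group)
  have "tensor_quotient G N K L (T Mod ?H) (\<lambda>a. ?H #>\<^bsub>T\<^esub> a) e"
  proof (intro tensor_quotient.intro tensor_quotient_axioms.intro)
    show "?H #>\<^bsub>T\<^esub> gen y h = \<one>\<^bsub>T Mod ?H\<^esub>" if "y \<in> N" "h \<in> L" for y h
      using H.rcos_const[OF T.is_group generate.incl[OF gen_in_tensor_gens(2)]] that by simp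
  qed (use nonabelian_tensor_axioms K comm_K hom exp_N in simp_all)
  then interpret Q: tensor_quotient G N K L "T Mod ?H" "\<lambda>a. ?H #>\<^bsub>T\<^esub> a" e .
  have u_carrier: "u \<in> carrier T"
    using u T.generate_incl[OF tensor_gens_subset_carrier[OF K(2)]] by auto
  have "?H #>\<^bsub>T\<^esub> (u [^]\<^bsub>T\<^esub> step_exponent e) = ?H"
    using Q.p_generate_tensor_gens_exp[OF u] Q.P.hom_nat_pow[OF u_carrier] by simp
  then show ?thesis
    using T.rcos_self[OF T.nat_pow_closed[OF u_carrier, of "step_exponent e"] H.subgroup_axioms]
    by simp
qed

lemma pow_derived_length_eq_one:
  assumes derived_d: "(derived G ^^ d) N = {\<one>}"
    and exp_N: "\<And>x. x \<in> N \<Longrightarrow> x [^] e = \<one>"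
    and u: "u \<in> carrier T"
  shows "u [^]\<^bsub>T\<^esub> (step_exponent e ^ d) = \<one>\<^bsub>T\<^esub>"
proof -
  have "u [^]\<^bsub>T\<^esub> (step_exponent e ^ i) \<in> generate T (tensor_gens ((derived G ^^ i) N))" for i
  proof (induction i)
    case 0
    then show ?case using u carrier_T_eq_generate by simp
  next
    case (Suc i)
    let ?D = "\<lambda>i. (derived G ^^ i) N"
    have "?D j \<lhd> G" "?D j \<subseteq> N" for j
      using normal_derived_iter derived_iter_subset normal_N by blast+
    moreover have "comm G k c \<in> ?D (Suc i)" if "k \<in> ?D i" "c \<in> ?D i" for k c
      using comm_mem_derived that by simp
    ultimately have "(u [^]\<^bsub>T\<^esub> (step_exponent e ^ i)) [^]\<^bsub>T\<^esub> step_exponent e \<in> generate T (tensor_gens (?D (Suc i)))"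
      using pow_step_exponent_mem_generate_tensor_gens exp_N Suc by blast
    then show ?case using u by (simp add: T.nat_pow_pow mult.commute)
  qed
  from this[of d] show ?thesis using derived_d generate_tensor_gens_one by simp
qed

lemma tensor_eq_wpow_Nil:
  assumes "(derived G ^^ d) N = {\<one>}" and "\<And>x. x \<in> N \<Longrightarrow> x [^] e = \<one>"
    and w: "w \<in> twords G N"
  shows "tensor_eq G N (wpow w (step_exponent e ^ d)) []"
proof -
  have "tensor_class G N w \<in> carrier T" using w by (simp add: tensor_group_carrier)
  then have "tensor_class G N w [^]\<^bsub>T\<^esub> (step_exponent e ^ d) = \<one>\<^bsub>T\<^esub>"
    using pow_derived_length_eq_one assms(1,2) by blast
  then show ?thesis by (simp add: tensor_group_pow tensor_group_one tensor_class_eq_iff)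
qed

end


section \<open>Exponents\<close>

lemma Least_period_dvd:
  fixes P :: "nat \<Rightarrow> bool"
  assumes PM: "P M" and M: "M > 0"
    and add: "\<And>a b. P a \<Longrightarrow> P b \<Longrightarrow> P (a + b)"
    and cancel: "\<And>a b. P (a + b) \<Longrightarrow> P a \<Longrightarrow> P b"
  shows "(if \<exists>n>0. P n then LEAST n. n > 0 \<and> P n else 0) dvd M"
proof -
  define E where "E = (LEAST n. n > 0 \<and> P n)"
  have E: "E > 0" "P E" using LeastI[of "\<lambda>n. n > 0 \<and> P n" M] PM M by (simp_all add: E_def)
  have P0: "P 0" using cancel[of M 0] PM by simp
  have PEq: "P (E * q)" for q by (induction q) (simp_all add: P0 add E(2))
  have "P (M mod E)" using cancel[of "E * (M div E)" "M mod E"] PM PEq by simp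
  moreover have "\<not> (M mod E > 0 \<and> P (M mod E))"
    using mod_less_divisor[OF E(1), of M] unfolding E_def by (rule not_less_Least)
  ultimately have "M mod E = 0" by simp
  then show ?thesis using PM M by (auto simp: E_def)
qed

lemma wpow_add: "wpow w (a + b) = wpow w a @ wpow w b"
  by (simp add: wpow_def replicate_add)

lemma word_exponent_dvd:
  fixes R :: "'a tword \<Rightarrow> 'a tword \<Rightarrow> bool"
  assumes refl: "\<And>u. R u u" and sym: "\<And>u v. R u v \<Longrightarrow> R v u"
    and trans: "\<And>u v w. R u v \<Longrightarrow> R v w \<Longrightarrow> R u w"
    and cong: "\<And>u v a b. R u v \<Longrightarrow> R (a @ u @ b) (a @ v @ b)"
    and M: "M > 0" and RM: "\<forall>w\<in>W. R (wpow w M) []"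
  shows "(if \<exists>n>0. \<forall>w\<in>W. R (wpow w n) [] then LEAST n. n > 0 \<and> (\<forall>w\<in>W. R (wpow w n) []) else 0)
    dvd M"
proof (rule Least_period_dvd[where P = "\<lambda>n. \<forall>w\<in>W. R (wpow w n) []", OF RM M])
  have append: "R (u @ v) (u' @ v')" if "R u u'" "R v v'" for u v u' v'
    using cong[OF that(1), of "[]" v] cong[OF that(2), of u' "[]"] trans by simp
  fix a b
  show "\<forall>w\<in>W. R (wpow w (a + b)) []" if "\<forall>w\<in>W. R (wpow w a) []" "\<forall>w\<in>W. R (wpow w b) []"
    using that append[of _ "[]" _ "[]"] by (simp add: wpow_add)
  show "\<forall>w\<in>W. R (wpow w b) []" if "\<forall>w\<in>W. R (wpow w (a + b)) []" "\<forall>w\<in>W. R (wpow w a) []"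
    using that append[OF sym refl, of _ "[]" "wpow _ b"] trans by (simp add: wpow_add) blast
qed

lemma tensor_eq_imp_wedge_eq: "tensor_eq G N u v \<Longrightarrow> wedge_eq G N u v"
  by (induction rule: tensor_eq.induct) (auto intro: wedge_eq.intros)

lemma subgroup_exponent_pow:
  assumes "subgroup_exponent G N > 0" and "x \<in> N"
  shows "x [^]\<^bsub>G\<^esub> subgroup_exponent G N = \<one>\<^bsub>G\<^esub>"
proof -
  let ?P = "\<lambda>n::nat. n > 0 \<and> (\<forall>x\<in>N. x [^]\<^bsub>G\<^esub> n = \<one>\<^bsub>G\<^esub>)"
  have ex: "\<exists>n. ?P n" using assms(1) by (auto simp: subgroup_exponent_def split: if_splits)
  then obtain n where "?P n" by blast
  then have "?P (LEAST n. ?P n)" by (rule LeastI)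
  moreover have "subgroup_exponent G N = (LEAST n. ?P n)" using ex by (simp add: subgroup_exponent_def)
  ultimately show ?thesis using assms(2) by simp
qed

theorem lemma6p4:
  fixes G :: "('a, 'b) monoid_scheme" and N :: "'a set" and d :: nat
  assumes "group G"
    and "N \<lhd> G"
    and "((derived G) ^^ d) N = {\<one>\<^bsub>G\<^esub>}"
    and "\<forall>k<d. ((derived G) ^^ k) N \<noteq> {\<one>\<^bsub>G\<^esub>}"
    and "subgroup_exponent G N > 0"
  shows "(odd (subgroup_exponent G N) \<longrightarrow>
            tensor_exponent G N dvd (subgroup_exponent G N) ^ d \<and>
            rel_multiplier_exponent G N dvd (subgroup_exponent G N) ^ d)
       \<and> (even (subgroup_exponent G N) \<longrightarrow>
            tensor_exponent G N dvd 2 ^ d * (subgroup_exponent G N) ^ d \<and>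
            rel_multiplier_exponent G N dvd 2 ^ d * (subgroup_exponent G N) ^ d)"
proof -
  interpret nonabelian_tensor G N
    by (intro nonabelian_tensor.intro nonabelian_tensor_axioms.intro assms(1,2))
  let ?e = "subgroup_exponent G N"
  let ?M = "step_exponent ?e ^ d"
  have M: "?M > 0" using assms(5) by (simp add: step_exponent_def)
  have tensor: "\<forall>w\<in>twords G N. tensor_eq G N (wpow w ?M) []"
    using tensor_eq_wpow_Nil[OF assms(3)] subgroup_exponent_pow[OF assms(5)] by blast
  then have wedge: "\<forall>w\<in>mwords G N. wedge_eq G N (wpow w ?M) []"
    by (auto simp: mwords_def intro: tensor_eq_imp_wedge_eq)
  have dvd: "tensor_exponent G N dvd ?M" "rel_multiplier_exponent G N dvd ?M"
    unfolding tensor_exponent_def rel_multiplier_exponent_def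
    using word_exponent_dvd[OF tensor_eq.refl tensor_eq.sym tensor_eq.trans tensor_eq.cong M tensor]
      word_exponent_dvd[OF wedge_eq.refl wedge_eq.sym wedge_eq.trans wedge_eq.cong M wedge]
    by simp_all
  show ?thesis
  proof (cases "odd ?e")
    case True
    then have "?M = ?e ^ d" by (simp add: step_exponent_def)
    then show ?thesis using dvd True by simp
  next
    case False
    then have "?M = 2 ^ d * ?e ^ d" by (simp add: step_exponent_def power_mult_distrib)
    then show ?thesis using dvd False by simp
  qed
qed

end
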